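(* The functor $(\mathbb{A}^{(S)})^{\infty}\times\textup{B}(\mathbb{Z}/p\mathbb{Z})\longrightarrow\Delta_{\mathbb{Z}/p\mathbb{Z}}$ (described in the context) is an equivalence of fibered categories.
   Context: Work over $k=\mathbb{F}_p$ with $G=\mathbb{Z}/p\mathbb{Z}$. For a ring $B$, $B((t))=B[[t]][t^{-1}]$ is the ring of Laurent series. $\Delta_{\mathbb{Z}/p\mathbb{Z}}$ is the category fibered in groupoids over the category of affine $\mathbb{F}_p$-schemes whose fiber over $\textup{Spec} B$ is the groupoid of $\mathbb{Z}/p\mathbb{Z}$-torsors over $B((t))$. By Artin–Schreier theory, for an $\mathbb{F}_p$-algebra $C$ the groupoid $\textup{B}(\mathbb{Z}/p\mathbb{Z})(C)$ of $\mathbb{Z}/p\mathbb{Z}$-torsors over $C$ is identified with the category whose objects are elements $c\in C$ (corresponding to $C[X]/(X^p-X-c)$ with action $X\mapsto X+f$, $f\in\mathbb{F}_p$) and whose morphisms $c\to d$ are elements $u\in C$ with $u^p-u+c=d$ (composition is the sum); in particular $\Delta_{\mathbb{Z}/p\mathbb{Z}}(B)$ is described this way with $C=B((t))$. Let $S=\{n\geq 1 : p\nmid n\}$ and let $\mathbb{A}^{(S)}$ be the functor on $\mathbb{F}_p$-algebras with $\mathbb{A}^{(S)}(B)$ the set of maps $b\colon S\to B$ with $\{s : b_s\neq 0\}$ finite. For a functor $X$ on affine $\mathbb{F}_p$-schemes, $X^{\infty}$ denotes the direct limit of the direct system of Frobenius morphisms $X\xrightarrow{F}X\xrightarrow{F}\cdots$.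 For $k\in\mathbb{N}$ define $\phi_k\colon\mathbb{A}^{(S)}\to\Delta_{\mathbb{Z}/p\mathbb{Z}}$ by $\phi_k(b)=\sum_{s\in S}b_s t^{-sp^k}\in B((t))$, and $\psi_k\colon\mathbb{A}^{(S)}\times\textup{B}(\mathbb{Z}/p\mathbb{Z})\to\Delta_{\mathbb{Z}/p\mathbb{Z}}$ by $\psi_k(b,b_0)=\phi_k(b)+b_0$. For all $b\in\mathbb{A}^{(S)}(B)$ and $b_0\in B$ there is a natural morphism $-\phi_k(b)\colon\psi_{k+1}\circ(F_{\mathbb{A}^{(S)}}\times\textup{id}_{\textup{B}(\mathbb{Z}/p\mathbb{Z})})(b,b_0)\to\psi_k(b,b_0)$ (where $F_{\mathbb{A}^{(S)}}$ is the Frobenius of $\mathbb{A}^{(S)}$), and these maps induce the functor $(\mathbb{A}^{(S)})^{\infty}\times\textup{B}(\mathbb{Z}/p\mathbb{Z})\to\Delta_{\mathbb{Z}/p\mathbb{Z}}$ of the claim. *)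

theory Defs
  imports "HOL-Computational_Algebra.Formal_Laurent_Series"
begin

text \<open>Throughout, an \<open>\<FF>_p\<close>-algebra is a type \<open>'b::comm_ring_1\<close> with \<open>of_nat p = 0\<close>,
  and \<open>B((t))\<close> is the Laurent series ring \<open>'b fls\<close>.\<close>

definition S_set :: "nat \<Rightarrow> nat set" where
  "S_set p = {n. n \<ge> 1 \<and> \<not> p dvd n}"

text \<open>Points of \<open>A^(S)\<close> over B: finitely supported maps S \<rightarrow> B (extended by 0 outside S).\<close>
definition AS_pts :: "nat \<Rightarrow> (nat \<Rightarrow> 'b::zero) set" where
  "AS_pts p = {b. finite {s. b s \<noteq> 0} \<and> (\<forall>s. b s \<noteq> 0 \<longrightarrow> s \<in> S_set p)}"

definition frobA :: "nat \<Rightarrow> (nat \<Rightarrow> 'b::comm_ring_1) \<Rightarrow> (nat \<Rightarrow> 'b)" where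
  "frobA p b = (\<lambda>s. b s ^ p)"

text \<open>Artin--Schreier groupoid on a ring C: morphisms c \<rightarrow> d are u with u^p - u + c = d;
  composition is the sum, identities are 0.\<close>
definition AS_hom :: "nat \<Rightarrow> 'c::comm_ring_1 \<Rightarrow> 'c \<Rightarrow> 'c set" where
  "AS_hom p c d = {u. u ^ p - u + c = d}"

definition phi :: "nat \<Rightarrow> nat \<Rightarrow> (nat \<Rightarrow> 'b::comm_ring_1) \<Rightarrow> 'b fls" where
  "phi p k b = (\<Sum>s\<in>{s. b s \<noteq> 0}. fls_const (b s) * fls_X_intpow (- int (s * p ^ k)))"

definition psi :: "nat \<Rightarrow> nat \<Rightarrow> (nat \<Rightarrow> 'b::comm_ring_1) \<Rightarrow> 'b \<Rightarrow> 'b fls" where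
  "psi p k b b0 = phi p k b + fls_const b0"

text \<open>Presentation of the fiber of \<open>(A^(S))^\<infinity> \<times> B(Z/pZ)\<close> over B:
  objects are triples (k, b, b0) (b at stage k of the Frobenius direct system);
  (k,b) and (k',b') define the same point of the direct limit iff they agree after
  pushing forward to a common stage.\<close>
definition colim_rel :: "nat \<Rightarrow> nat \<times> (nat \<Rightarrow> 'b::comm_ring_1) \<Rightarrow> nat \<times> (nat \<Rightarrow> 'b) \<Rightarrow> bool" where
  "colim_rel p x y = (\<exists>N. N \<ge> fst x \<and> N \<ge> fst y \<and>
      (frobA p ^^ (N - fst x)) (snd x) = (frobA p ^^ (N - fst y)) (snd y))"

definition src_obj :: "nat \<Rightarrow> (nat \<times> (nat \<Rightarrow> 'b::comm_ring_1) \<times> 'b) set" where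
  "src_obj p = {(k, b, b0). b \<in> AS_pts p}"

definition src_hom :: "nat \<Rightarrow> nat \<times> (nat \<Rightarrow> 'b::comm_ring_1) \<times> 'b
      \<Rightarrow> nat \<times> (nat \<Rightarrow> 'b) \<times> 'b \<Rightarrow> 'b set" where
  "src_hom p x y = (case x of (k, b, b0) \<Rightarrow> case y of (k', b', b0') \<Rightarrow>
      if colim_rel p (k, b) (k', b') then AS_hom p b0 b0' else {})"

definition F_obj :: "nat \<Rightarrow> nat \<times> (nat \<Rightarrow> 'b::comm_ring_1) \<times> 'b \<Rightarrow> 'b fls" where
  "F_obj p x = (case x of (k, b, b0) \<Rightarrow> psi p k b b0)"

text \<open>Composite of the transition morphisms \<open>-\<phi>_j\<close>, read as the morphism
  \<open>\<psi>_k(b,b0) \<rightarrow> \<psi>_{k+m}(F^m b, b0)\<close>.\<close>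
definition conn :: "nat \<Rightarrow> nat \<Rightarrow> (nat \<Rightarrow> 'b::comm_ring_1) \<Rightarrow> nat \<Rightarrow> 'b fls" where
  "conn p k b m = (\<Sum>j<m. phi p (k + j) ((frobA p ^^ j) b))"

text \<open>The functor on morphisms: pass to a common stage N, apply u, come back.\<close>
definition F_hom :: "nat \<Rightarrow> nat \<times> (nat \<Rightarrow> 'b::comm_ring_1) \<times> 'b
      \<Rightarrow> nat \<times> (nat \<Rightarrow> 'b) \<times> 'b \<Rightarrow> 'b \<Rightarrow> 'b fls" where
  "F_hom p x y u = (case x of (k, b, b0) \<Rightarrow> case y of (k', b', b0') \<Rightarrow>
      (let N = (LEAST N. N \<ge> k \<and> N \<ge> k' \<and> (frobA p ^^ (N - k)) b = (frobA p ^^ (N - k')) b')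
       in conn p k b (N - k) + fls_const u - conn p k' b' (N - k')))"

end

(* The Artin-Schreier groupoid over C identifies c with c + u^p - u.  Since Frobenius is additive
   and (a t^-n)^p = a^p t^-(p n), the sum phi_k(b) + phi_(k+1)(F b) + ... + phi_(k+m-1)(F^(m-1) b)
   is a morphism from psi_k(b, b0) to psi_(k+m)(F^m b, b0); routing through a common stage of the
   Frobenius system therefore makes the functor well defined on the direct limit.

   Full faithfulness: between two objects pushed to a common stage, every morphism differs from the
   canonical one by a series z with z^p - z constant, and comparing the coefficients of z along
   n, p n, p^2 n, ... shows that z is constant.  The same comparison along the orbits -s p^e with
   p not dividing s shows that psi_M(c) and psi_M(c') can only be isomorphic if F^j c = F^j c'
   for some j, i.e. if (M, c) and (M, c') define the same point of the direct limit.

   Essential surjectivity: u^p - u = c - psi_k(b, c_0) is solved coefficientwise by the recursion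
   u_n = u_(n/p)^p - c_n, except at the negative multiples of p^k, whose defects are collected in b;
   choosing p^k beyond the pole order of c keeps b finitely supported. *)

theory Submission
  imports Defs "HOL-Computational_Algebra.Primes"
begin

unbundle fps_syntax

section \<open>Frobenius in characteristic p\<close>

lemma CHAR_eq_prime:
  assumes "prime p" "of_nat p = (0::'a::comm_semiring_1)"
  shows "CHAR('a) = p"
proof -
  have "CHAR('a) dvd p" using assms(2) by (simp add: of_nat_eq_0_iff_char_dvd)
  with assms(1) show ?thesis by (auto simp: prime_nat_iff)
qed

lemma frobenius_add:
  fixes x y :: "'a::comm_semiring_1"
  assumes "prime p" "of_nat p = (0::'a)"
  shows "(x + y) ^ p = x ^ p + y ^ p"
  using assms CHAR_eq_prime[OF assms] by (intro freshmans_dream) auto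

lemma frobenius_sum:
  fixes f :: "'i \<Rightarrow> 'a::comm_semiring_1"
  assumes "prime p" "of_nat p = (0::'a)"
  shows "sum f A ^ p = (\<Sum>i\<in>A. f i ^ p)"
  using assms CHAR_eq_prime[OF assms] by (intro freshmans_dream_sum) auto

lemma frobenius_pow_diff:
  fixes x y :: "'a::comm_ring_1"
  assumes "prime p" "of_nat p = (0::'a)"
  shows "(x - y) ^ (p ^ j) = x ^ (p ^ j) - y ^ (p ^ j)"
proof -
  have "x ^ (p ^ j) = (x - y + y) ^ (p ^ j)" by simp
  also have "\<dots> = (x - y) ^ (p ^ j) + y ^ (p ^ j)"
    using assms CHAR_eq_prime[OF assms] by (intro freshmans_dream') auto
  finally show ?thesis by simp
qed

lemma frobenius_diff:
  fixes x y :: "'a::comm_ring_1"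
  assumes "prime p" "of_nat p = (0::'a)"
  shows "(x - y) ^ p = x ^ p - y ^ p"
  using frobenius_pow_diff[OF assms, of x y 1] by simp

lemma fls_of_nat_eq_0_iff: "of_nat n = (0::'a::comm_semiring_1 fls) \<longleftrightarrow> of_nat n = (0::'a)"
  by (simp add: fls_of_nat)

lemma fls_const_inject: "fls_const a = fls_const b \<longleftrightarrow> a = b"
  by (metis fls_const_nth)

lemma fls_power_prime_nth:
  fixes u :: "'a::comm_ring_1 fls"
  assumes "prime p" "of_nat p = (0::'a)"
  shows "(u ^ p) $$ n = (if int p dvd n then (u $$ (n div int p)) ^ p else 0)"
proof -
  have p: "p > 0" using assms(1) prime_gt_0_nat by blast
  have char: "of_nat p = (0::'a fls)" using assms(2) by (simp add: fls_of_nat_eq_0_iff)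
  \<comment> \<open>Truncating u to the window I changes u^p only in degrees beyond |n|, and on the finite
    truncation Frobenius acts termwise.\<close>
  define I where "I = {fls_subdegree u..\<bar>n\<bar>}"
  define P where "P = (\<Sum>i\<in>I. fls_const (u $$ i) * fls_X_intpow i)"
  have P_nth: "P $$ j = (if j \<in> I then u $$ j else 0)" for j
  proof -
    have "P $$ j = (\<Sum>i\<in>I. if j = i then u $$ i else 0)"
      unfolding P_def fls_nth_sum by (intro sum.cong) auto
    thus ?thesis by (simp add: sum.delta I_def)
  qed
  have "(u - P) ^ p $$ n = 0"
  proof (cases "u - P = 0")
    case False
    have "\<bar>n\<bar> + 1 \<le> fls_subdegree (u - P)"
      using False by (intro fls_subdegree_geI) (auto simp: P_nth I_def)
    hence "n < int p * fls_subdegree (u - P)"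
      using p by (smt (verit) mult_le_cancel_right1 of_nat_0_less_iff of_nat_1_eq_iff)
    thus ?thesis by (rule fls_pow_nth_below_subdegree)
  qed (use p in \<open>simp add: power_0_left\<close>)
  moreover have "u ^ p = P ^ p + (u - P) ^ p"
    using frobenius_add[OF assms(1) char, of P "u - P"] by simp
  moreover have "P ^ p = (\<Sum>i\<in>I. fls_const ((u $$ i) ^ p) * fls_X_intpow (int p * i))"
    unfolding P_def frobenius_sum[OF assms(1) char]
    by (simp add: power_mult_distrib fls_const_power fls_X_intpow_power)
  moreover have "\<dots> $$ n = (if int p dvd n then (u $$ (n div int p)) ^ p else 0)"
  proof (cases "int p dvd n")
    case True
    then obtain q where q: "n = int p * q" by blast
    have "q \<le> \<bar>n\<bar>" using q p by (smt (verit) abs_mult mult_le_cancel_right1 of_nat_0_less_iff)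
    hence q_I: "q \<in> I \<or> u $$ q = 0" by (auto simp: I_def intro: fls_subdegree_leI)
    have "(\<Sum>i\<in>I. fls_const ((u $$ i) ^ p) * fls_X_intpow (int p * i)) $$ n
        = (\<Sum>i\<in>I. if q = i then (u $$ i) ^ p else 0)"
      unfolding fls_nth_sum using q p by (intro sum.cong) auto
    also have "\<dots> = (u $$ q) ^ p"
      using q_I p by (auto simp: sum.delta I_def power_0_left)
    finally show ?thesis using True q p by simp
  qed (auto simp: fls_nth_sum intro!: sum.neutral)
  ultimately show ?thesis by simp
qed

lemma fls_const_of_AS_const:
  fixes z :: "'a::comm_ring_1 fls"
  assumes "prime p" "of_nat p = (0::'a)" "z ^ p - z = fls_const d"
  shows "z = fls_const (z $$ 0)"
proof -
  have p: "p \<ge> 2" using prime_ge_2_nat[OF assms(1)] .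
  have "z $$ n = 0" if "n \<noteq> 0" for n
    using that
  proof (induction "nat \<bar>n\<bar>" arbitrary: n rule: less_induct)
    case less
    have "(z ^ p - z) $$ n = 0" using assms(3) less.prems by simp
    hence fixed: "(z ^ p) $$ n = z $$ n" by simp
    show ?case
    proof (cases "int p dvd n")
      case True
      then obtain q where q: "n = int p * q" by blast
      with less.prems p have "q \<noteq> 0" "nat \<bar>q\<bar> < nat \<bar>n\<bar>"
        by (auto simp: abs_mult nat_mult_distrib)
      hence "z $$ q = 0" using less.hyps by blast
      then show ?thesis using fixed fls_power_prime_nth[OF assms(1,2), of z n] q p
        by (simp add: power_0_left)
    next
      case False
      then show ?thesis using fixed fls_power_prime_nth[OF assms(1,2), of z n] by simp
    qed
  qed
  thus ?thesis by (intro fls_eqI) auto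
qed

lemma AS_ptsD:
  assumes "b \<in> AS_pts p"
  shows "finite {s. b s \<noteq> 0}" "b s \<noteq> 0 \<Longrightarrow> s \<in> S_set p"
  using assms unfolding AS_pts_def by auto

lemma AS_pts_zero: "b \<in> AS_pts p \<Longrightarrow> b 0 = 0"
  using AS_ptsD(2)[of b p 0] by (auto simp: S_set_def)

lemma phi_nth:
  assumes "p > 0" "b \<in> AS_pts p"
  shows "phi p k b $$ n = (if n \<le> 0 \<and> int (p ^ k) dvd n then b (nat (- n) div p ^ k) else 0)"
proof -
  have exponent: "n + int (s * p ^ k) = 0 \<longleftrightarrow>
      n \<le> 0 \<and> int (p ^ k) dvd n \<and> s = nat (- n) div p ^ k" for s
  proof
    assume "n + int (s * p ^ k) = 0"
    hence n: "n = - int (s * p ^ k)" by simp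
    hence "nat (- n) = s * p ^ k" by (simp only: minus_minus nat_int)
    with n show "n \<le> 0 \<and> int (p ^ k) dvd n \<and> s = nat (- n) div p ^ k" using assms(1) by simp
  next
    assume "n \<le> 0 \<and> int (p ^ k) dvd n \<and> s = nat (- n) div p ^ k"
    then obtain q where "n = - int (q * p ^ k)" "s = q"
      by (metis dvd_div_mult_self dvd_minus_iff int_dvd_int_iff minus_minus nat_0_le neg_0_le_iff_le)
    thus "n + int (s * p ^ k) = 0" by simp
  qed
  have "phi p k b $$ n = (\<Sum>s\<in>{s. b s \<noteq> 0}. if n + int (s * p ^ k) = 0 then b s else 0)"
    unfolding phi_def fls_nth_sum by (intro sum.cong) auto
  also have "\<dots> = (\<Sum>s\<in>{s. b s \<noteq> 0}.
      if s = nat (- n) div p ^ k \<and> n \<le> 0 \<and> int (p ^ k) dvd n then b s else 0)"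
    unfolding exponent by (intro sum.cong) auto
  also have "\<dots> = (if n \<le> 0 \<and> int (p ^ k) dvd n then b (nat (- n) div p ^ k) else 0)"
    using AS_ptsD(1)[OF assms(2)] by (auto simp: sum.delta' simp del: of_nat_power)
  finally show ?thesis .
qed

section \<open>Transition morphisms and common stages\<close>

lemma funpow_frobA: "(frobA p ^^ j) b = (\<lambda>s. b s ^ (p ^ j))"
  by (induction j) (auto simp: frobA_def power_mult[symmetric] mult.commute)

lemma funpow_frobA_AS_pts:
  assumes "p > 0" "b \<in> AS_pts p"
  shows "(frobA p ^^ j) b \<in> AS_pts p"
proof -
  have "{s. b s ^ (p ^ j) \<noteq> 0} \<subseteq> {s. b s \<noteq> 0}"
    using assms(1) by (auto simp: power_0_left)
  thus ?thesis unfolding funpow_frobA AS_pts_def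
    using AS_ptsD[OF assms(2)] by (auto elim: rev_finite_subset)
qed

lemma phi_power_prime:
  assumes "prime p" "of_nat p = (0::'a::comm_ring_1)" "(b :: nat \<Rightarrow> 'a) \<in> AS_pts p"
  shows "phi p k b ^ p = phi p (Suc k) (frobA p b)"
proof (rule fls_eqI)
  fix n
  have p: "p > 0" using assms(1) prime_gt_0_nat by blast
  have Fb: "frobA p b \<in> AS_pts p" using funpow_frobA_AS_pts[OF p assms(3), of 1] by simp
  show "(phi p k b ^ p) $$ n = phi p (Suc k) (frobA p b) $$ n"
  proof (cases "int p dvd n")
    case True
    then obtain q where q: "n = int p * q" by blast
    have "nat (- n) = p * nat (- q)" if "q \<le> 0"
      using q that by (metis minus_mult_right nat_int nat_mult_distrib of_nat_0_le_iff)
    hence "nat (- n) div p ^ Suc k = nat (- q) div p ^ k" if "q \<le> 0"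
      using that p by (simp add: div_mult2_eq)
    moreover have "n \<le> 0 \<longleftrightarrow> q \<le> 0" "int (p ^ Suc k) dvd n \<longleftrightarrow> int (p ^ k) dvd q"
      using q p by (simp_all add: mult_le_0_iff)
    ultimately show ?thesis
      unfolding fls_power_prime_nth[OF assms(1,2)] phi_nth[OF p assms(3)] phi_nth[OF p Fb]
      using True q p by (auto simp: frobA_def power_0_left simp del: of_nat_power)
  next
    case False
    hence "\<not> int (p ^ Suc k) dvd n" by (metis dvd_mult_left of_nat_mult power_Suc)
    with False show ?thesis
      unfolding fls_power_prime_nth[OF assms(1,2)] phi_nth[OF p Fb] by simp
  qed
qed

lemma conn_0 [simp]: "conn p k b 0 = 0"
  by (simp add: conn_def)

lemma conn_Suc: "conn p k b (Suc m) = conn p k b m + phi p (k + m) ((frobA p ^^ m) b)"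
  by (simp add: conn_def)

lemma conn_add: "conn p k b (m + m') = conn p k b m + conn p (k + m) ((frobA p ^^ m) b) m'"
proof (induction m')
  case (Suc m')
  have "(frobA p ^^ (m + m')) b = (frobA p ^^ m') ((frobA p ^^ m) b)"
    by (metis add.commute comp_apply funpow_add)
  with Suc show ?case by (simp add: conn_Suc add.assoc)
qed simp

lemma conn_AS:
  assumes "prime p" "of_nat p = (0::'a::comm_ring_1)" "(b :: nat \<Rightarrow> 'a) \<in> AS_pts p"
  shows "conn p k b m ^ p - conn p k b m = phi p (k + m) ((frobA p ^^ m) b) - phi p k b"
proof (induction m)
  case 0
  then show ?case using prime_gt_0_nat[OF assms(1)] by (simp add: power_0_left)
next
  case (Suc m)
  have char: "of_nat p = (0::'a fls)" using assms(2) by (simp add: fls_of_nat_eq_0_iff)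
  have p: "p > 0" using assms(1) prime_gt_0_nat by blast
  have "conn p k b (Suc m) ^ p = conn p k b m ^ p + phi p (k + m) ((frobA p ^^ m) b) ^ p"
    unfolding conn_Suc by (rule frobenius_add[OF assms(1) char])
  also have "phi p (k + m) ((frobA p ^^ m) b) ^ p = phi p (k + Suc m) ((frobA p ^^ Suc m) b)"
    using phi_power_prime[OF assms(1,2) funpow_frobA_AS_pts[OF p assms(3)]] by simp
  finally show ?case using Suc unfolding conn_Suc by (simp add: algebra_simps)
qed

definition common_stage ::
    "nat \<Rightarrow> nat \<Rightarrow> (nat \<Rightarrow> 'a::comm_ring_1) \<Rightarrow> nat \<Rightarrow> (nat \<Rightarrow> 'a) \<Rightarrow> nat \<Rightarrow> bool" where
  "common_stage p k b k' b' N \<longleftrightarrow>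
     k \<le> N \<and> k' \<le> N \<and> (frobA p ^^ (N - k)) b = (frobA p ^^ (N - k')) b'"

definition bridge ::
    "nat \<Rightarrow> nat \<Rightarrow> (nat \<Rightarrow> 'a::comm_ring_1) \<Rightarrow> nat \<Rightarrow> (nat \<Rightarrow> 'a) \<Rightarrow> nat \<Rightarrow> 'a fls" where
  "bridge p k b k' b' N = conn p k b (N - k) - conn p k' b' (N - k')"

lemma colim_rel_iff_common_stage:
  "colim_rel p (k, b) (k', b') \<longleftrightarrow> (\<exists>N. common_stage p k b k' b' N)"
  by (auto simp: colim_rel_def common_stage_def)

lemma common_stage_refl: "common_stage p k b k b k"
  by (simp add: common_stage_def)

lemma common_stage_trans:
  "common_stage p k b k' b' N \<Longrightarrow> common_stage p k' b' k'' b'' N \<Longrightarrow>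
    common_stage p k b k'' b'' N"
  by (simp add: common_stage_def)

lemma funpow_diff_split:
  assumes "k \<le> N" "N \<le> N'"
  shows "(f ^^ (N' - k)) x = (f ^^ (N' - N)) ((f ^^ (N - k)) x)"
proof -
  from assms have "N' - k = (N' - N) + (N - k)" by simp
  thus ?thesis by (simp add: funpow_add)
qed

lemma common_stage_mono:
  assumes "common_stage p k b k' b' N" "N \<le> N'"
  shows "common_stage p k b k' b' N'"
  using assms funpow_diff_split[of k N N' "frobA p" b] funpow_diff_split[of k' N N' "frobA p" b']
  by (auto simp: common_stage_def)

lemma bridge_mono:
  assumes "common_stage p k b k' b' N" "N \<le> N'"
  shows "bridge p k b k' b' N' = bridge p k b k' b' N"
proof -
  have N: "k \<le> N" "k' \<le> N" "(frobA p ^^ (N - k)) b = (frobA p ^^ (N - k')) b'"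
    using assms(1) by (auto simp: common_stage_def)
  have split: "N' - k = (N - k) + (N' - N)" "N' - k' = (N - k') + (N' - N)"
    using N assms(2) by auto
  show ?thesis unfolding bridge_def split conn_add using N by simp
qed

lemma bridge_trans: "bridge p k b k'' b'' N = bridge p k b k' b' N + bridge p k' b' k'' b'' N"
  by (simp add: bridge_def)

lemma bridge_self [simp]: "bridge p k b k b N = 0"
  by (simp add: bridge_def)

lemma F_hom_eq_bridge:
  assumes "common_stage p k b k' b' N"
  shows "F_hom p (k, b, b0) (k', b', b0') u = bridge p k b k' b' N + fls_const u"
proof -
  define N0 where
    "N0 = (LEAST N. k \<le> N \<and> k' \<le> N \<and> (frobA p ^^ (N - k)) b = (frobA p ^^ (N - k')) b')"
  have "common_stage p k b k' b' N0"
    unfolding N0_def common_stage_def by (rule LeastI[of _ N]) (use assms in \<open>simp add: common_stage_def\<close>)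
  moreover have "N0 \<le> N"
    unfolding N0_def by (rule Least_le) (use assms in \<open>simp add: common_stage_def\<close>)
  ultimately have "bridge p k b k' b' N = bridge p k b k' b' N0" by (rule bridge_mono)
  thus ?thesis by (simp add: F_hom_def Let_def N0_def bridge_def algebra_simps)
qed

lemma bridge_AS:
  assumes "prime p" "of_nat p = (0::'a::comm_ring_1)" "(b :: nat \<Rightarrow> 'a) \<in> AS_pts p" "b' \<in> AS_pts p"
    "k \<le> N" "k' \<le> N"
  shows "bridge p k b k' b' N ^ p - bridge p k b k' b' N =
     (phi p N ((frobA p ^^ (N - k)) b) - phi p k b) - (phi p N ((frobA p ^^ (N - k')) b') - phi p k' b')"
proof -
  have char: "of_nat p = (0::'a fls)" using assms(2) by (simp add: fls_of_nat_eq_0_iff)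
  define A where "A = conn p k b (N - k)"
  define A' where "A' = conn p k' b' (N - k')"
  have "bridge p k b k' b' N ^ p - bridge p k b k' b' N = (A ^ p - A) - (A' ^ p - A')"
    using frobenius_diff[OF assms(1) char, of A A'] by (simp add: bridge_def A_def A'_def)
  also have "A ^ p - A = phi p N ((frobA p ^^ (N - k)) b) - phi p k b"
    using conn_AS[OF assms(1-3), of k "N - k"] assms(5) by (simp add: A_def)
  also have "A' ^ p - A' = phi p N ((frobA p ^^ (N - k')) b') - phi p k' b'"
    using conn_AS[OF assms(1,2,4), of k' "N - k'"] assms(6) by (simp add: A'_def)
  finally show ?thesis .
qed

lemma bridge_AS_common_stage:
  assumes "prime p" "of_nat p = (0::'a::comm_ring_1)" "(b :: nat \<Rightarrow> 'a) \<in> AS_pts p" "b' \<in> AS_pts p"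
    and "common_stage p k b k' b' N"
  shows "bridge p k b k' b' N ^ p - bridge p k b k' b' N = phi p k' b' - phi p k b"
  using assms(5) bridge_AS[OF assms(1-4), of k N k'] by (simp add: common_stage_def)

section \<open>Morphisms between the objects psi\<close>

lemma AS_hom_minus:
  fixes w g :: "'a::comm_ring_1"
  assumes "prime p" "of_nat p = (0::'a)" "w \<in> AS_hom p a a'"
  shows "(w - g) ^ p - (w - g) = (a' - a) - (g ^ p - g)"
proof -
  have "(w - g) ^ p = w ^ p - g ^ p" by (rule frobenius_diff[OF assms(1,2)])
  with assms(3) show ?thesis by (simp add: AS_hom_def algebra_simps)
qed

lemma bridge_plus_const_mem_AS_hom:
  assumes "prime p" "of_nat p = (0::'a::comm_ring_1)" "(b :: nat \<Rightarrow> 'a) \<in> AS_pts p" "b' \<in> AS_pts p"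
    and "common_stage p k b k' b' N" and "u \<in> AS_hom p b0 b0'"
  shows "bridge p k b k' b' N + fls_const u \<in> AS_hom p (psi p k b b0) (psi p k' b' b0')"
proof -
  have char: "of_nat p = (0::'a fls)" using assms(2) by (simp add: fls_of_nat_eq_0_iff)
  define g where "g = bridge p k b k' b' N"
  have g: "g ^ p - g = phi p k' b' - phi p k b"
    unfolding g_def by (rule bridge_AS_common_stage[OF assms(1-5)])
  have "(g + fls_const u) ^ p - (g + fls_const u) + psi p k b b0
      = (g ^ p - g) + phi p k b + fls_const (u ^ p - u + b0)"
    by (simp add: frobenius_add[OF assms(1) char] psi_def fls_const_power
        flip: fls_plus_const fls_minus_const)
  also have "\<dots> = psi p k' b' b0'"
    using assms(6) by (simp add: g psi_def AS_hom_def)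
  finally show ?thesis by (simp add: AS_hom_def g_def)
qed

lemma AS_hom_psi_eq_bridge_plus_const:
  assumes "prime p" "of_nat p = (0::'a::comm_ring_1)" "(b :: nat \<Rightarrow> 'a) \<in> AS_pts p" "b' \<in> AS_pts p"
    and "common_stage p k b k' b' N" and "w \<in> AS_hom p (psi p k b b0) (psi p k' b' b0')"
  obtains u where "u \<in> AS_hom p b0 b0'" "w = bridge p k b k' b' N + fls_const u"
proof -
  have char: "of_nat p = (0::'a fls)" using assms(2) by (simp add: fls_of_nat_eq_0_iff)
  define g where "g = bridge p k b k' b' N"
  have g: "g ^ p - g = phi p k' b' - phi p k b"
    unfolding g_def by (rule bridge_AS_common_stage[OF assms(1-5)])
  define z where "z = w - g"
  have "z ^ p - z = fls_const (b0' - b0)"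
    unfolding z_def AS_hom_minus[OF assms(1) char assms(6)] g
    by (simp add: psi_def flip: fls_minus_const)
  hence z_const: "z = fls_const (z $$ 0)" by (rule fls_const_of_AS_const[OF assms(1,2)])
  have "fls_const ((z $$ 0) ^ p - z $$ 0) = fls_const (b0' - b0)"
    using \<open>z ^ p - z = fls_const (b0' - b0)\<close> z_const by (metis fls_const_power fls_minus_const)
  hence "z $$ 0 \<in> AS_hom p b0 b0'"
    by (simp add: fls_const_inject AS_hom_def algebra_simps)
  moreover have "w = g + fls_const (z $$ 0)"
    using z_const by (simp add: z_def algebra_simps)
  ultimately show ?thesis using that by (simp add: g_def)
qed

lemma phi_nth_orbit:
  assumes "prime p" "b \<in> AS_pts p" "s \<in> S_set p"
  shows "phi p M b $$ (- (int s * int p ^ e)) = (if e = M then b s else 0)"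
proof -
  have p: "p > 0" using assms(1) prime_gt_0_nat by blast
  have "coprime (p ^ M) s"
    using assms(1,3) by (simp add: S_set_def prime_imp_coprime)
  hence p_dvd: "p ^ M dvd s * p ^ e \<longleftrightarrow> M \<le> e"
    using prime_ge_2_nat[OF assms(1)] by (simp add: coprime_dvd_mult_right_iff dvd_power_iff_le)
  define n where "n = - (int s * int p ^ e)"
  have dvd: "int (p ^ M) dvd n \<longleftrightarrow> M \<le> e"
    unfolding n_def dvd_minus_iff using p_dvd by (simp only: int_dvd_int_iff flip: of_nat_mult of_nat_power)
  have "nat (- n) div p ^ M = s * p ^ (e - M)" if "M \<le> e"
  proof -
    have "nat (- n) = (s * p ^ (e - M)) * p ^ M"
      using that by (simp add: n_def nat_mult_distrib nat_power_eq mult.assoc flip: power_add)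
    thus ?thesis using p by simp
  qed
  moreover have "n \<le> 0" by (simp add: n_def)
  ultimately have "phi p M b $$ n = (if M \<le> e then b (s * p ^ (e - M)) else 0)"
    by (simp add: phi_nth[OF p assms(2)] dvd del: of_nat_power)
  moreover have "b (s * p ^ (e - M)) = 0" if "M < e"
    using that AS_ptsD(2)[OF assms(2), of "s * p ^ (e - M)"] by (auto simp: S_set_def)
  ultimately show ?thesis by (auto simp: n_def)
qed

lemma Artin_Schreier_orbit:
  fixes g :: "nat \<Rightarrow> 'a::comm_ring_1"
  assumes "p > 0" "g 0 = (if M = 0 then D else 0)"
    and "\<And>e. g (Suc e) = g e ^ p + (if Suc e = M then D else 0)"
  shows "g (M + j) = D ^ (p ^ j)"
proof (induction j)
  case 0
  have "e < M \<Longrightarrow> g e = 0" for e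
    by (induction e) (use assms in \<open>auto simp: power_0_left\<close>)
  then show ?case using assms by (cases M) (auto simp: power_0_left)
next
  case (Suc j)
  then show ?case using assms(3)[of "M + j"] by (simp add: power_mult[symmetric] mult.commute)
qed

lemma funpow_frobA_eq_of_AS_phi_diff:
  fixes z :: "'a::comm_ring_1 fls"
  assumes "prime p" "of_nat p = (0::'a)" "c \<in> AS_pts p" "c' \<in> AS_pts p"
    and AS: "z ^ p - z = phi p M c' - phi p M c + fls_const d"
  shows "\<exists>j. (frobA p ^^ j) c = (frobA p ^^ j) c'"
proof -
  have p: "p > 0" using assms(1) prime_gt_0_nat by blast
  obtain L :: nat where L: "\<And>n. n > L \<Longrightarrow> z $$ (- int n) = 0"
    using fls_nth_vanishes_below_natE by blast
  have "c s ^ (p ^ L) = c' s ^ (p ^ L)" for s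
  proof (cases "s \<in> S_set p")
    case False
    hence "c s = 0" "c' s = 0" using AS_ptsD(2)[OF assms(3)] AS_ptsD(2)[OF assms(4)] by blast+
    then show ?thesis by simp
  next
    case True
    define g where "g e = z $$ (- (int s * int p ^ e))" for e
    have coeff: "(z ^ p) $$ (- (int s * int p ^ e)) - g e = (if e = M then c' s - c s else 0)" for e
    proof -
      have "s \<noteq> 0" using True by (simp add: S_set_def)
      hence "(z ^ p - z) $$ (- (int s * int p ^ e)) =
          (phi p M c' - phi p M c) $$ (- (int s * int p ^ e))"
        unfolding AS using p by simp
      thus ?thesis
        using phi_nth_orbit[OF assms(1,3) True, of M e] phi_nth_orbit[OF assms(1,4) True, of M e]
        by (simp add: g_def)
    qed
    have "\<not> int p dvd - (int s * int p ^ 0)" using True by (simp add: S_set_def)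
    hence "g 0 = (if M = 0 then c s - c' s else 0)"
      using coeff[of 0] by (auto simp: fls_power_prime_nth[OF assms(1,2)] minus_equation_iff algebra_simps)
    moreover have "g (Suc e) = g e ^ p + (if Suc e = M then c s - c' s else 0)" for e
    proof -
      define m where "m = - (int s * int p ^ e)"
      have "- (int s * int p ^ Suc e) = int p * m" by (simp add: m_def)
      hence "(z ^ p) $$ (- (int s * int p ^ Suc e)) = g e ^ p"
        using p by (simp add: fls_power_prime_nth[OF assms(1,2)] g_def flip: m_def)
      with coeff[of "Suc e"] show ?thesis by (auto simp: algebra_simps)
    qed
    ultimately have "g (M + L) = (c s - c' s) ^ (p ^ L)"
      by (rule Artin_Schreier_orbit[OF p])
    moreover have "L < s * p ^ (M + L)"
    proof -
      have "L < p ^ L" using prime_ge_2_nat[OF assms(1)] by (intro power_gt_expt) simp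
      also have "\<dots> \<le> p ^ (M + L)" using p by (intro power_increasing) auto
      also have "\<dots> \<le> s * p ^ (M + L)" using True by (simp add: S_set_def)
      finally show ?thesis .
    qed
    hence "g (M + L) = 0" using L[of "s * p ^ (M + L)"] by (simp add: g_def)
    ultimately show ?thesis using frobenius_pow_diff[OF assms(1,2)] by simp
  qed
  hence "(frobA p ^^ L) c = (frobA p ^^ L) c'" by (simp add: funpow_frobA)
  thus ?thesis ..
qed

lemma colim_rel_of_AS_hom_psi:
  assumes "prime p" "of_nat p = (0::'a::comm_ring_1)" "(b :: nat \<Rightarrow> 'a) \<in> AS_pts p" "b' \<in> AS_pts p"
    and "w \<in> AS_hom p (psi p k b b0) (psi p k' b' b0')"
  shows "colim_rel p (k, b) (k', b')"
proof -
  have p: "p > 0" using assms(1) prime_gt_0_nat by blast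
  have char: "of_nat p = (0::'a fls)" using assms(2) by (simp add: fls_of_nat_eq_0_iff)
  define M where "M = max k k'"
  have M: "k \<le> M" "k' \<le> M" by (simp_all add: M_def)
  define c where "c = (frobA p ^^ (M - k)) b"
  define c' where "c' = (frobA p ^^ (M - k')) b'"
  define g where "g = bridge p k b k' b' M"
  have g: "g ^ p - g = (phi p M c - phi p k b) - (phi p M c' - phi p k' b')"
    unfolding g_def c_def c'_def by (rule bridge_AS[OF assms(1-4) M])
  have "(w - g) ^ p - (w - g) = phi p M c' - phi p M c + fls_const (b0' - b0)"
    unfolding AS_hom_minus[OF assms(1) char assms(5)] g
    by (simp add: psi_def algebra_simps flip: fls_minus_const)
  moreover have "c \<in> AS_pts p" "c' \<in> AS_pts p"
    unfolding c_def c'_def using funpow_frobA_AS_pts[OF p] assms(3,4) by auto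
  ultimately obtain j where "(frobA p ^^ j) c = (frobA p ^^ j) c'"
    using funpow_frobA_eq_of_AS_phi_diff[OF assms(1,2)] by blast
  hence "common_stage p k b k' b' (M + j)"
    using M funpow_diff_split[of k M "M + j" "frobA p" b] funpow_diff_split[of k' M "M + j" "frobA p" b']
    by (simp add: common_stage_def c_def c'_def)
  thus ?thesis by (auto simp: colim_rel_iff_common_stage)
qed

section \<open>Essential surjectivity\<close>

lemma abs_div_less:
  assumes "(p::nat) \<ge> 2" "n \<noteq> 0" "int p dvd n"
  shows "\<bar>n div int p\<bar> < \<bar>n\<bar>"
  using assms by (auto elim!: dvdE simp: abs_mult nat_mult_distrib)

text \<open>Coefficients of the solution u of \<open>u^p - u = c - psi_k(b, c_0)\<close>; the guard \<open>p < 2\<close>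
  only serves termination.\<close>

function AS_coeff :: "nat \<Rightarrow> nat \<Rightarrow> 'a::comm_ring_1 fls \<Rightarrow> int \<Rightarrow> 'a" where
  "AS_coeff p k c n = (if n = 0 \<or> p < 2 then 0 else if n < 0 \<and> int (p ^ k) dvd n then 0
     else (if int p dvd n then AS_coeff p k c (n div int p) ^ p else 0) - c $$ n)"
  by auto
termination
  by (relation "measure (\<lambda>(p, k, c, n). nat \<bar>n\<bar>)") (auto simp: abs_div_less)

declare AS_coeff.simps [simp del]

lemma AS_coeff_eq_0:
  assumes "p \<ge> 2" and c: "\<And>m. m < - int L \<Longrightarrow> c $$ m = 0"
  shows "n < 0 \<Longrightarrow> (\<And>i. i < k \<Longrightarrow> int (p ^ i) dvd n \<Longrightarrow> n div int (p ^ i) < - int L)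
    \<Longrightarrow> AS_coeff p k c n = 0"
proof (induction "nat \<bar>n\<bar>" arbitrary: n rule: less_induct)
  case less
  show ?case
  proof (cases "int (p ^ k) dvd n")
    case True
    then show ?thesis using less.prems by (subst AS_coeff.simps) simp
  next
    case not_dvd: False
    hence "0 < k" by (cases k) auto
    hence "c $$ n = 0" using less.prems(2)[of 0] c by simp
    moreover have "AS_coeff p k c (n div int p) = 0" if dvd: "int p dvd n"
    proof -
      obtain q where q: "n = int p * q" using dvd by blast
      have "q < 0" using q less.prems(1) by (simp add: mult_less_0_iff)
      moreover have "q div int (p ^ i) < - int L" if "i < k" "int (p ^ i) dvd q" for i
      proof -
        have "int (p ^ Suc i) dvd n" using that(2) q by (simp add: mult_dvd_mono)
        hence "Suc i < k" using not_dvd that(1) by (metis Suc_lessI)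
        moreover have "n div int (p ^ Suc i) = q div int (p ^ i)"
          using q assms(1) by simp
        ultimately show ?thesis using less.prems(2) \<open>int (p ^ Suc i) dvd n\<close> by fastforce
      qed
      moreover have "nat \<bar>q\<bar> < nat \<bar>n\<bar>"
        using abs_div_less[OF assms(1) _ dvd] less.prems(1) q assms(1) \<open>q < 0\<close> by auto
      ultimately show ?thesis using less.hyps q assms(1) by simp
    qed
    ultimately show ?thesis using less.prems(1) not_dvd assms(1)
      by (subst AS_coeff.simps) (auto simp: power_0_left)
  qed
qed

definition AS_stage_point :: "nat \<Rightarrow> nat \<Rightarrow> 'a::comm_ring_1 fls \<Rightarrow> nat \<Rightarrow> 'a" where
  "AS_stage_point p L c s = (if s \<in> S_set p
     then c $$ (- (int s * int p ^ Suc L)) - AS_coeff p (Suc L) c (- (int s * int p ^ L)) ^ p else 0)"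

lemma AS_stage_point_AS_pts:
  assumes "p \<ge> 2" and c: "\<And>m. m < - int L \<Longrightarrow> c $$ m = 0"
  shows "AS_stage_point p L c \<in> AS_pts p"
proof -
  have "AS_stage_point p L c s = 0" if "L < s" for s
  proof -
    have "(1::int) \<le> int p ^ Suc L" using assms(1) by (intro one_le_power) simp
    hence "int s \<le> int s * int p ^ Suc L" by (metis mult.right_neutral mult_left_mono of_nat_0_le_iff)
    hence "c $$ (- (int s * int p ^ Suc L)) = 0" using that by (intro c) linarith
    moreover have "AS_coeff p (Suc L) c (- (int s * int p ^ L)) = 0"
    proof (rule AS_coeff_eq_0[OF assms])
      show "- (int s * int p ^ L) < 0" using that assms(1) by simp
      fix i assume "i < Suc L"
      hence eq: "- (int s * int p ^ L) = - (int s * int p ^ (L - i)) * int (p ^ i)"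
        by (simp flip: power_add)
      have "int (p ^ i) \<noteq> 0" using assms(1) by simp
      hence div: "- (int s * int p ^ L) div int (p ^ i) = - (int s * int p ^ (L - i))"
        by (subst eq) (rule nonzero_mult_div_cancel_right)
      have "(1::int) \<le> int p ^ (L - i)" using assms(1) by (intro one_le_power) simp
      hence "int s \<le> int s * int p ^ (L - i)" by (metis mult.right_neutral mult_left_mono of_nat_0_le_iff)
      with div show "- (int s * int p ^ L) div int (p ^ i) < - int L"
        using that by linarith
    qed
    ultimately show ?thesis using assms(1) by (simp add: AS_stage_point_def power_0_left)
  qed
  hence "{s. AS_stage_point p L c s \<noteq> 0} \<subseteq> {..L}" by (auto simp: not_less[symmetric])
  hence "finite {s. AS_stage_point p L c s \<noteq> 0}" by (rule finite_subset) simp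
  thus ?thesis by (simp add: AS_pts_def AS_stage_point_def)
qed

lemma AS_coeff_eq_0_below:
  assumes "p \<ge> 2" and c: "\<And>m. m < - int L \<Longrightarrow> c $$ m = 0"
    and n: "n < - (int (Suc L) * int p ^ Suc L)"
  shows "AS_coeff p (Suc L) c n = 0"
proof (rule AS_coeff_eq_0[OF assms(1,2)])
  have "0 \<le> int (Suc L) * int p ^ Suc L" by simp
  thus "n < 0" using n by linarith
  fix i assume "i < Suc L" "int (p ^ i) dvd n"
  then obtain q where q: "n = int p ^ i * q" by auto
  have "int p ^ i \<le> int p ^ Suc L" using \<open>i < Suc L\<close> assms(1) by (intro power_increasing) auto
  hence "int (Suc L) * int p ^ i \<le> int (Suc L) * int p ^ Suc L" by (intro mult_left_mono) auto
  hence "int p ^ i * q < int p ^ i * - int (Suc L)" using n q by (simp add: algebra_simps)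
  hence "q < - int (Suc L)" using assms(1) by (simp add: mult_less_cancel_left)
  thus "n div int (p ^ i) < - int L" using q assms(1) by simp
qed

lemma AS_coeff_solves:
  assumes "prime p" and c: "\<And>m. m < - int L \<Longrightarrow> c $$ m = 0"
  shows "(if int p dvd n then AS_coeff p (Suc L) c (n div int p) ^ p else 0) - AS_coeff p (Suc L) c n
     + phi p (Suc L) (AS_stage_point p L c) $$ n + (if n = 0 then c $$ 0 else 0) = c $$ n"
    (is "?V - ?U n + ?phi + _ = _")
proof -
  have p: "p \<ge> 2" using prime_ge_2_nat[OF assms(1)] .
  have b: "AS_stage_point p L c \<in> AS_pts p" by (rule AS_stage_point_AS_pts[OF p c])
  consider "n = 0" | "n \<noteq> 0" "\<not> (n < 0 \<and> int (p ^ Suc L) dvd n)"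
    | "n < 0" "int (p ^ Suc L) dvd n" by blast
  then show ?thesis
  proof cases
    case 1
    then show ?thesis using p AS_pts_zero[OF b]
      by (simp add: AS_coeff.simps phi_nth[OF _ b] power_0_left)
  next
    case 2
    then show ?thesis using p by (subst (2) AS_coeff.simps) (auto simp: phi_nth[OF _ b])
  next
    case 3
    from 3(2) obtain q where q: "n = int (p ^ Suc L) * q" by (rule dvdE)
    with 3(1) p have "q < 0" by (simp add: mult_less_0_iff)
    define m where "m = nat (- q)"
    have m: "m \<ge> 1" "n = - (int m * int p ^ Suc L)" using q \<open>q < 0\<close> by (simp_all add: m_def)
    have "?U n = 0" using 3 p by (subst AS_coeff.simps) simp
    moreover have "?phi = AS_stage_point p L c m"
    proof -
      have "nat (- n) = m * p ^ Suc L" by (simp add: m(2) nat_mult_distrib nat_power_eq)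
      thus ?thesis using 3 p by (simp add: phi_nth[OF _ b])
    qed
    moreover have "?V = AS_coeff p (Suc L) c (- (int m * int p ^ L)) ^ p"
    proof -
      define r where "r = - (int m * int p ^ L)"
      have "n = int p * r" by (simp add: m(2) r_def)
      thus ?thesis using p by (simp flip: r_def)
    qed
    moreover have "AS_coeff p (Suc L) c (- (int m * int p ^ L)) = 0 \<and> c $$ n = 0" if not_S: "m \<notin> S_set p"
    proof
      obtain m' where m': "m = p * m'" using not_S m(1) by (auto simp: S_set_def)
      have "- (int m * int p ^ L) = int (p ^ Suc L) * - int m'" by (simp add: m')
      thus "AS_coeff p (Suc L) c (- (int m * int p ^ L)) = 0"
        using m(1) p by (subst AS_coeff.simps) (simp add: m')
      have "L < p ^ Suc L" using power_gt_expt[of p "Suc L"] p by simp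
      hence "int L < int p ^ Suc L" by (metis of_nat_less_iff of_nat_power)
      moreover have "int p ^ Suc L \<le> int m * int p ^ Suc L"
        using mult_right_mono[of 1 "int m" "int p ^ Suc L"] m(1) by simp
      ultimately show "c $$ n = 0" using m(2) by (intro c) linarith
    qed
    ultimately show ?thesis using p m(1) by (auto simp: AS_stage_point_def m(2) power_0_left)
  qed
qed

lemma AS_hom_psi_nonempty:
  assumes "prime p" "of_nat p = (0::'a::comm_ring_1)"
  shows "\<exists>k b b0. (b :: nat \<Rightarrow> 'a) \<in> AS_pts p \<and> AS_hom p (psi p k b b0) c \<noteq> {}"
proof -
  have p: "p \<ge> 2" using prime_ge_2_nat[OF assms(1)] .
  define L where "L = nat (- fls_subdegree c)"
  have c: "c $$ m = 0" if "m < - int L" for m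
    using that by (intro fls_eq0_below_subdegree) (simp add: L_def split: if_splits)
  define b where "b = AS_stage_point p L c"
  define u where "u = Abs_fls (AS_coeff p (Suc L) c)"
  have u: "u $$ n = AS_coeff p (Suc L) c n" for n
    unfolding u_def using AS_coeff_eq_0_below[OF p c]
    by (intro nth_Abs_fls_lower_bound[of "- (int (Suc L) * int p ^ Suc L)"]) auto
  have "u ^ p - u + psi p (Suc L) b (c $$ 0) = c"
  proof (rule fls_eqI)
    fix n :: int
    have "(u ^ p - u + psi p (Suc L) b (c $$ 0)) $$ n
        = (u ^ p) $$ n - u $$ n + phi p (Suc L) b $$ n + (if n = 0 then c $$ 0 else 0)"
      by (simp add: psi_def)
    also have "\<dots> = c $$ n"
      unfolding fls_power_prime_nth[OF assms] u b_def by (rule AS_coeff_solves[OF assms(1) c])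
    finally show "(u ^ p - u + psi p (Suc L) b (c $$ 0)) $$ n = c $$ n" .
  qed
  hence "u \<in> AS_hom p (psi p (Suc L) b (c $$ 0)) c" by (simp add: AS_hom_def)
  moreover have "b \<in> AS_pts p" unfolding b_def by (rule AS_stage_point_AS_pts[OF p c])
  ultimately show ?thesis by blast
qed

section \<open>The equivalence\<close>

lemma src_obj_Pair: "(k, b, b0) \<in> src_obj p \<longleftrightarrow> b \<in> AS_pts p"
  by (simp add: src_obj_def)

lemma src_hom_Pair: "src_hom p (k, b, b0) (k', b', b0') =
    (if colim_rel p (k, b) (k', b') then AS_hom p b0 b0' else {})"
  by (simp add: src_hom_def)

lemma F_obj_Pair: "F_obj p (k, b, b0) = psi p k b b0"
  by (simp add: F_obj_def)

lemma F_hom_mem_AS_hom: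
  assumes "prime p" "of_nat p = (0::'a::comm_ring_1)"
    and "x \<in> (src_obj p :: (nat \<times> (nat \<Rightarrow> 'a) \<times> 'a) set)" "y \<in> src_obj p" "u \<in> src_hom p x y"
  shows "F_hom p x y u \<in> AS_hom p (F_obj p x) (F_obj p y)"
proof -
  obtain k b b0 k' b' b0' where xy: "x = (k, b, b0)" "y = (k', b', b0')" by (cases x, cases y)
  obtain N where N: "common_stage p k b k' b' N" and u: "u \<in> AS_hom p b0 b0'"
    using assms(5) by (auto simp: xy src_hom_Pair colim_rel_iff_common_stage split: if_splits)
  show ?thesis
    using bridge_plus_const_mem_AS_hom[OF assms(1,2) _ _ N u] assms(3,4)
    by (simp add: xy F_hom_eq_bridge[OF N] F_obj_Pair src_obj_Pair)
qed

lemma F_hom_id: "F_hom p x x 0 = 0"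
  by (cases x) (simp add: F_hom_eq_bridge[OF common_stage_refl])

lemma F_hom_comp:
  assumes "u \<in> src_hom p x y" "v \<in> src_hom p y z"
  shows "F_hom p x z (u + v) = F_hom p x y u + F_hom p y z v"
proof -
  obtain k b b0 k' b' b0' k'' b'' b0'' where xyz: "x = (k, b, b0)" "y = (k', b', b0')" "z = (k'', b'', b0'')"
    by (cases x, cases y, cases z)
  obtain N1 N2 where "common_stage p k b k' b' N1" "common_stage p k' b' k'' b'' N2"
    using assms by (auto simp: xyz src_hom_Pair colim_rel_iff_common_stage split: if_splits)
  hence N: "common_stage p k b k' b' (max N1 N2)" "common_stage p k' b' k'' b'' (max N1 N2)"
    by (auto elim: common_stage_mono)
  show ?thesis
    using bridge_trans[of p k b k'' b'' "max N1 N2" k' b']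
    by (simp add: xyz F_hom_eq_bridge[OF N(1)] F_hom_eq_bridge[OF N(2)]
        F_hom_eq_bridge[OF common_stage_trans[OF N]] algebra_simps flip: fls_plus_const)
qed

lemma bij_betw_F_hom:
  assumes "prime p" "of_nat p = (0::'a::comm_ring_1)"
    and "x \<in> (src_obj p :: (nat \<times> (nat \<Rightarrow> 'a) \<times> 'a) set)" "y \<in> src_obj p"
  shows "bij_betw (F_hom p x y) (src_hom p x y) (AS_hom p (F_obj p x) (F_obj p y))"
proof -
  obtain k b b0 k' b' b0' where xy: "x = (k, b, b0)" "y = (k', b', b0')" by (cases x, cases y)
  have b: "b \<in> AS_pts p" "b' \<in> AS_pts p" using assms(3,4) by (simp_all add: xy src_obj_Pair)
  show ?thesis
  proof (cases "colim_rel p (k, b) (k', b')")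
    case False
    hence "AS_hom p (psi p k b b0) (psi p k' b' b0') = {}"
      using colim_rel_of_AS_hom_psi[OF assms(1,2) b] by blast
    with False show ?thesis by (simp add: xy src_hom_Pair F_obj_Pair bij_betw_def)
  next
    case True
    then obtain N where N: "common_stage p k b k' b' N" by (auto simp: colim_rel_iff_common_stage)
    have "inj_on (\<lambda>u. bridge p k b k' b' N + fls_const u) (AS_hom p b0 b0')"
      by (rule inj_onI) (simp add: fls_const_inject)
    moreover have "(\<lambda>u. bridge p k b k' b' N + fls_const u) ` AS_hom p b0 b0'
        = AS_hom p (psi p k b b0) (psi p k' b' b0')"
      using bridge_plus_const_mem_AS_hom[OF assms(1,2) b N]
        AS_hom_psi_eq_bridge_plus_const[OF assms(1,2) b N] by blast
    moreover have "F_hom p x y = (\<lambda>u. bridge p k b k' b' N + fls_const u)"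
      by (rule ext) (simp add: xy F_hom_eq_bridge[OF N])
    ultimately show ?thesis using True
      by (simp add: xy src_hom_Pair F_obj_Pair bij_betw_def)
  qed
qed

lemma F_obj_ess_surj:
  assumes "prime p" "of_nat p = (0::'a::comm_ring_1)"
  shows "\<exists>x\<in>(src_obj p :: (nat \<times> (nat \<Rightarrow> 'a) \<times> 'a) set). AS_hom p (F_obj p x) c \<noteq> {}"
proof -
  obtain k b b0 where "(b :: nat \<Rightarrow> 'a) \<in> AS_pts p" "AS_hom p (psi p k b b0) c \<noteq> {}"
    using AS_hom_psi_nonempty[OF assms] by blast
  thus ?thesis by (intro bexI[of _ "(k, b, b0)"]) (simp_all add: src_obj_Pair F_obj_Pair)
qed

theorem theorem4p16:
  fixes p :: nat
  assumes "prime p" and "of_nat p = (0::'b::comm_ring_1)"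
  shows
    \<comment> \<open>it is a functor on the fiber over B\<close>
    "(\<forall>x\<in>(src_obj p :: (nat \<times> (nat \<Rightarrow> 'b) \<times> 'b) set). \<forall>y\<in>src_obj p. \<forall>u\<in>src_hom p x y.
        F_hom p x y u \<in> AS_hom p (F_obj p x) (F_obj p y))
   \<and> (\<forall>x\<in>(src_obj p :: (nat \<times> (nat \<Rightarrow> 'b) \<times> 'b) set). F_hom p x x 0 = 0)
   \<and> (\<forall>x\<in>(src_obj p :: (nat \<times> (nat \<Rightarrow> 'b) \<times> 'b) set). \<forall>y\<in>src_obj p. \<forall>z\<in>src_obj p.
        \<forall>u\<in>src_hom p x y. \<forall>v\<in>src_hom p y z.
          F_hom p x z (u + v) = F_hom p x y u + F_hom p y z v)
   \<comment> \<open>fully faithful\<close>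
   \<and> (\<forall>x\<in>(src_obj p :: (nat \<times> (nat \<Rightarrow> 'b) \<times> 'b) set). \<forall>y\<in>src_obj p.
        bij_betw (F_hom p x y) (src_hom p x y) (AS_hom p (F_obj p x) (F_obj p y)))
   \<comment> \<open>essentially surjective\<close>
   \<and> (\<forall>c :: 'b fls. \<exists>x\<in>src_obj p. AS_hom p (F_obj p x) c \<noteq> {})"
  using F_hom_mem_AS_hom[OF assms] F_hom_id F_hom_comp bij_betw_F_hom[OF assms] F_obj_ess_surj[OF assms]
  by blast

end
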